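(* Let $1<p<\infty$ and let $T:\ell_p\to\ell_p$ be the bounded linear operator defined by $Te_1=e_1$ and $Te_n=(1-\frac1n)e_n$ for all $n\ge2$, where $\{e_n\}$ is the standard unit vector basis of (real) $\ell_p$. Then $\|T\|=1$, $M_T=\{\pm e_1\}$, and $T$ is not a smooth point of $\mathbb{B}(\ell_p)$.
   Context: $\mathbb{B}(\ell_p)$ has the operator norm; $M_T=\{x\in\ell_p:\|x\|=1,\ \|Tx\|=\|T\|\}$. A nonzero element $x$ of a normed space $\mathbb{Z}$ is smooth if there is a unique $f\in\mathbb{Z}^*$ with $\|f\|=1$ and $f(x)=\|x\|$. *)

theory Defs
  imports "HOL-Analysis.Analysis"
begin

text \<open>Real sequence space l_p, sequences indexed by nat (index k corresponds to the
paper's index k+1).\<close>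

definition lp :: "real \<Rightarrow> (nat \<Rightarrow> real) set" where
  "lp p = {x. summable (\<lambda>n. \<bar>x n\<bar> powr p)}"

definition lp_norm :: "real \<Rightarrow> (nat \<Rightarrow> real) \<Rightarrow> real" where
  "lp_norm p x = (\<Sum>n. \<bar>x n\<bar> powr p) powr (1 / p)"

text \<open>Standard unit vectors: unit_vec k is e_(k+1).\<close>
definition unit_vec :: "nat \<Rightarrow> nat \<Rightarrow> real" where
  "unit_vec k = (\<lambda>n. if n = k then 1 else 0)"

text \<open>Bounded linear operators on l_p, represented extensionally (zero outside l_p).\<close>
definition bdd_ops :: "real \<Rightarrow> ((nat \<Rightarrow> real) \<Rightarrow> (nat \<Rightarrow> real)) set" where
  "bdd_ops p = {T.
     (\<forall>x. x \<notin> lp p \<longrightarrow> T x = (\<lambda>_. 0)) \<and>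
     (\<forall>x\<in>lp p. T x \<in> lp p) \<and>
     (\<forall>x\<in>lp p. \<forall>y\<in>lp p. T (\<lambda>k. x k + y k) = (\<lambda>k. T x k + T y k)) \<and>
     (\<forall>x\<in>lp p. \<forall>c. T (\<lambda>k. c * x k) = (\<lambda>k. c * T x k)) \<and>
     (\<exists>C. \<forall>x\<in>lp p. lp_norm p (T x) \<le> C * lp_norm p x)}"

definition op_norm :: "real \<Rightarrow> ((nat \<Rightarrow> real) \<Rightarrow> (nat \<Rightarrow> real)) \<Rightarrow> real" where
  "op_norm p T = Sup {lp_norm p (T x) | x. x \<in> lp p \<and> lp_norm p x = 1}"

definition norm_attain_set :: "real \<Rightarrow> ((nat \<Rightarrow> real) \<Rightarrow> (nat \<Rightarrow> real)) \<Rightarrow> (nat \<Rightarrow> real) set" where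
  "norm_attain_set p T = {x. x \<in> lp p \<and> lp_norm p x = 1 \<and> lp_norm p (T x) = op_norm p T}"

text \<open>Elements of the dual space of B(l_p): bounded linear functionals (values on B(l_p) only matter).\<close>
definition bdd_functional :: "real \<Rightarrow> (((nat \<Rightarrow> real) \<Rightarrow> (nat \<Rightarrow> real)) \<Rightarrow> real) \<Rightarrow> bool" where
  "bdd_functional p f \<longleftrightarrow>
     (\<forall>S\<in>bdd_ops p. \<forall>U\<in>bdd_ops p. f (\<lambda>x k. S x k + U x k) = f S + f U) \<and>
     (\<forall>S\<in>bdd_ops p. \<forall>c. f (\<lambda>x k. c * S x k) = c * f S) \<and>
     (\<exists>C. \<forall>S\<in>bdd_ops p. \<bar>f S\<bar> \<le> C * op_norm p S)"

definition dual_norm :: "real \<Rightarrow> (((nat \<Rightarrow> real) \<Rightarrow> (nat \<Rightarrow> real)) \<Rightarrow> real) \<Rightarrow> real" where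
  "dual_norm p f = Sup {\<bar>f S\<bar> | S. S \<in> bdd_ops p \<and> op_norm p S \<le> 1}"

definition supporting_functional ::
  "real \<Rightarrow> ((nat \<Rightarrow> real) \<Rightarrow> (nat \<Rightarrow> real)) \<Rightarrow> (((nat \<Rightarrow> real) \<Rightarrow> (nat \<Rightarrow> real)) \<Rightarrow> real) \<Rightarrow> bool" where
  "supporting_functional p T f \<longleftrightarrow>
     bdd_functional p f \<and> dual_norm p f = 1 \<and> f T = op_norm p T"

text \<open>Smooth point of B(l_p): nonzero, with a unique (as element of the dual, i.e. up to
values on B(l_p)) norming functional.\<close>
definition smooth_op :: "real \<Rightarrow> ((nat \<Rightarrow> real) \<Rightarrow> (nat \<Rightarrow> real)) \<Rightarrow> bool" where
  "smooth_op p T \<longleftrightarrow> T \<in> bdd_ops p \<and> T \<noteq> (\<lambda>_ _. 0) \<and>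
     (\<exists>f. supporting_functional p T f) \<and>
     (\<forall>f g. supporting_functional p T f \<and> supporting_functional p T g \<longrightarrow>
        (\<forall>S\<in>bdd_ops p. f S = g S))"

end

theory Submission
  imports Defs
begin

text \<open>T is diagonal with entries 1, 1/2, 2/3, 3/4, \<dots>, so it is a contraction whose norm is
  attained only at \<open>\<plusminus>e\<^sub>1\<close>. Two functionals on \<open>B(\<ell>\<^sub>p)\<close> norm T: the entry \<open>\<langle>Se\<^sub>1, e\<^sub>1\<rangle>\<close>,
  and a generalised (Banach) limit of the diagonal entries \<open>\<langle>Se\<^sub>n, e\<^sub>n\<rangle>\<close>, which is 1 at T because
  these entries tend to 1. They differ on the projection onto \<open>e\<^sub>1\<close>, where the first gives 1 and
  the second 0; hence T is not smooth.\<close>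

section \<open>The sequence space \<open>\<ell>\<^sub>p\<close>\<close>

lemma lp_mono:
  assumes "x \<in> lp p" "\<And>n. \<bar>y n\<bar> \<le> \<bar>x n\<bar>" "0 < p"
  shows "y \<in> lp p"
  unfolding lp_def mem_Collect_eq
proof (rule summable_comparison_test)
  show "\<exists>N. \<forall>n\<ge>N. norm (\<bar>y n\<bar> powr p) \<le> \<bar>x n\<bar> powr p"
    using assms by (auto intro!: powr_mono2)
qed (use assms in \<open>simp add: lp_def\<close>)

lemma lp_scale:
  assumes "x \<in> lp p"
  shows "(\<lambda>k. c * x k) \<in> lp p"
proof -
  have "summable (\<lambda>n. \<bar>c\<bar> powr p * \<bar>x n\<bar> powr p)"
    using assms by (intro summable_mult) (simp add: lp_def)
  then show ?thesis unfolding lp_def by (simp add: abs_mult powr_mult)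
qed

lemma abs_add_powr_le:
  fixes a b p :: real
  assumes "0 < p"
  shows "\<bar>a + b\<bar> powr p \<le> 2 powr p * (\<bar>a\<bar> powr p + \<bar>b\<bar> powr p)"
proof -
  have "\<bar>a + b\<bar> powr p \<le> (2 * max \<bar>a\<bar> \<bar>b\<bar>) powr p"
    using assms by (intro powr_mono2) auto
  also have "\<dots> = 2 powr p * max \<bar>a\<bar> \<bar>b\<bar> powr p" by (simp add: powr_mult)
  also have "max \<bar>a\<bar> \<bar>b\<bar> powr p \<le> \<bar>a\<bar> powr p + \<bar>b\<bar> powr p" by (simp add: max_def)
  finally show ?thesis by (simp add: mult_left_mono)
qed

lemma lp_add:
  assumes "x \<in> lp p" "y \<in> lp p" "0 < p"
  shows "(\<lambda>k. x k + y k) \<in> lp p"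
  unfolding lp_def
proof (rule CollectI, rule summable_comparison_test)
  show "summable (\<lambda>n. 2 powr p * (\<bar>x n\<bar> powr p + \<bar>y n\<bar> powr p))"
    using assms by (intro summable_mult summable_add) (auto simp: lp_def)
  show "\<exists>N. \<forall>n\<ge>N. norm (\<bar>x n + y n\<bar> powr p) \<le> 2 powr p * (\<bar>x n\<bar> powr p + \<bar>y n\<bar> powr p)"
    using abs_add_powr_le[OF assms(3)] by auto
qed

lemma lp_norm_powr:
  assumes "x \<in> lp p" "0 < p"
  shows "lp_norm p x powr p = (\<Sum>n. \<bar>x n\<bar> powr p)"
proof -
  have "0 \<le> (\<Sum>n. \<bar>x n\<bar> powr p)"
    using assms by (intro suminf_nonneg) (auto simp: lp_def)
  then show ?thesis using assms by (simp add: lp_norm_def powr_powr powr_one)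
qed

lemma lp_norm_scale:
  assumes "x \<in> lp p" "0 < p"
  shows "lp_norm p (\<lambda>k. c * x k) = \<bar>c\<bar> * lp_norm p x"
proof -
  have "(\<Sum>n. \<bar>c * x n\<bar> powr p) = \<bar>c\<bar> powr p * (\<Sum>n. \<bar>x n\<bar> powr p)"
    using assms by (simp add: abs_mult powr_mult suminf_mult lp_def)
  moreover have "0 \<le> (\<Sum>n. \<bar>x n\<bar> powr p)"
    using assms by (intro suminf_nonneg) (auto simp: lp_def)
  ultimately show ?thesis
    using assms by (simp add: lp_norm_def powr_mult powr_powr)
qed

lemma abs_le_lp_norm:
  assumes "x \<in> lp p" "0 < p"
  shows "\<bar>x n\<bar> \<le> lp_norm p x"
proof -
  have "\<bar>x n\<bar> powr p \<le> (\<Sum>k. \<bar>x k\<bar> powr p)"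
    using assms sum_le_suminf[of "\<lambda>k. \<bar>x k\<bar> powr p" "{n}"] by (auto simp: lp_def)
  then have "(\<bar>x n\<bar> powr p) powr (1/p) \<le> (\<Sum>k. \<bar>x k\<bar> powr p) powr (1/p)"
    using assms by (intro powr_mono2) auto
  then show ?thesis using assms by (simp add: lp_norm_def powr_powr)
qed

lemma unit_vec_in_lp: "unit_vec k \<in> lp p"
  unfolding lp_def unit_vec_def mem_Collect_eq by (rule summable_finite[of "{k}"]) auto

lemma lp_norm_unit_vec:
  assumes "0 < p"
  shows "lp_norm p (unit_vec k) = 1"
proof -
  have "(\<Sum>n. \<bar>unit_vec k n\<bar> powr p) = (\<Sum>n\<in>{k}. \<bar>unit_vec k n\<bar> powr p)"
    by (rule suminf_finite) (auto simp: unit_vec_def)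
  then show ?thesis using assms by (simp add: lp_norm_def unit_vec_def)
qed

lemma lp_norm_tail_tendsto_0:
  assumes "x \<in> lp p" "0 < p"
  shows "(\<lambda>N. lp_norm p (\<lambda>k. if k < N then 0 else x k)) \<longlonglongrightarrow> 0"
proof -
  define a where "a = (\<lambda>n. \<bar>x n\<bar> powr p)"
  have a: "summable a" using assms by (simp add: a_def lp_def)
  have tail: "(\<Sum>k. \<bar>if k < N then 0 else x k\<bar> powr p) = suminf a - sum a {..<N}" for N
  proof -
    have "(\<lambda>k. \<bar>if k < N then 0 else x k\<bar> powr p) = (\<lambda>k. a k - (if k < N then a k else 0))"
      by (auto simp: a_def)
    moreover have head: "summable (\<lambda>k. if k < N then a k else 0)"
      by (rule summable_finite[of "{..<N}"]) auto
    moreover have "(\<Sum>k. if k < N then a k else 0) = sum a {..<N}"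
      by (subst suminf_finite[of "{..<N}"]) auto
    ultimately show ?thesis using suminf_diff[OF a head] by simp
  qed
  have "(\<lambda>N. suminf a - sum a {..<N}) \<longlonglongrightarrow> 0"
    using tendsto_diff[OF tendsto_const summable_LIMSEQ[OF a], of "suminf a"] by simp
  moreover have "0 \<le> suminf a - sum a {..<N}" for N
    using sum_le_suminf[OF a, of "{..<N}"] by (auto simp: a_def)
  ultimately have "(\<lambda>N. (suminf a - sum a {..<N}) powr (1/p)) \<longlonglongrightarrow> 0"
    using assms by (intro tendsto_zero_powrI[where b = "1 / p"]) auto
  then show ?thesis unfolding lp_norm_def tail .
qed

lemma lp_norm_mult_le:
  assumes "x \<in> lp p" "0 < p" "\<And>n. \<bar>c n\<bar> \<le> 1"
  shows "lp_norm p (\<lambda>n. c n * x n) \<le> lp_norm p x"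
proof -
  have le: "\<bar>c n * x n\<bar> \<le> \<bar>x n\<bar>" for n
    using assms by (auto simp: abs_mult mult_left_le_one_le)
  have cx: "summable (\<lambda>n. \<bar>c n * x n\<bar> powr p)"
    using lp_mono[OF assms(1) le assms(2)] by (simp add: lp_def)
  have "(\<Sum>n. \<bar>c n * x n\<bar> powr p) \<le> (\<Sum>n. \<bar>x n\<bar> powr p)"
    using assms le cx by (intro suminf_le powr_mono2) (auto simp: lp_def)
  moreover have "0 \<le> (\<Sum>n. \<bar>c n * x n\<bar> powr p)" using cx by (intro suminf_nonneg) auto
  ultimately show ?thesis
    unfolding lp_norm_def using assms by (intro powr_mono2) auto
qed

lemma lp_norm_mult_eq_imp_eq_0:
  assumes x: "x \<in> lp p" and p: "0 < p" and c: "\<And>n. \<bar>c n\<bar> \<le> 1"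
    and eq: "lp_norm p (\<lambda>n. c n * x n) = lp_norm p x" and "\<bar>c m\<bar> < 1"
  shows "x m = 0"
proof (rule ccontr)
  assume "x m \<noteq> 0"
  define a where "a = (\<lambda>n. \<bar>x n\<bar> powr p)"
  define b where "b = (\<lambda>n. \<bar>c n * x n\<bar> powr p)"
  have cx: "(\<lambda>n. c n * x n) \<in> lp p"
    using c by (intro lp_mono[OF x _ p]) (auto simp: abs_mult mult_left_le_one_le)
  have a: "summable a" and b: "summable b"
    using x cx by (auto simp: a_def b_def lp_def)
  have ba: "b n = \<bar>c n\<bar> powr p * a n" for n
    by (simp add: a_def b_def abs_mult powr_mult)
  have "b n \<le> a n" for n
    unfolding ba using c[of n] p powr_mono2[of p "\<bar>c n\<bar>" 1]
    by (intro mult_left_le_one_le) (auto simp: a_def)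
  moreover have "suminf (\<lambda>n. a n - b n) = 0"
    using eq lp_norm_powr[OF x p] lp_norm_powr[OF cx p] suminf_diff[OF a b]
    by (simp add: a_def b_def)
  ultimately have "a m = b m"
    using suminf_eq_zero_iff[OF summable_diff[OF a b]] by (simp add: fun_eq_iff)
  moreover have "\<bar>c m\<bar> powr p < 1"
    using \<open>\<bar>c m\<bar> < 1\<close> p powr_less_mono2[of p "\<bar>c m\<bar>" 1] by simp
  moreover have "0 < a m" using \<open>x m \<noteq> 0\<close> by (simp add: a_def)
  ultimately show False by (simp add: ba)
qed

section \<open>Bounded operators on \<open>\<ell>\<^sub>p\<close>\<close>

lemma bdd_opsD:
  assumes "T \<in> bdd_ops p"
  shows "\<And>x. x \<in> lp p \<Longrightarrow> T x \<in> lp p"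
    and "\<And>x y. x \<in> lp p \<Longrightarrow> y \<in> lp p \<Longrightarrow> T (\<lambda>k. x k + y k) = (\<lambda>k. T x k + T y k)"
    and "\<And>x c. x \<in> lp p \<Longrightarrow> T (\<lambda>k. c * x k) = (\<lambda>k. c * T x k)"
    and "\<exists>C. \<forall>x\<in>lp p. lp_norm p (T x) \<le> C * lp_norm p x"
  using assms unfolding bdd_ops_def by blast+

lemma lp_norm_le_op_norm:
  assumes "S \<in> bdd_ops p" "x \<in> lp p" "lp_norm p x = 1"
  shows "lp_norm p (S x) \<le> op_norm p S"
proof -
  obtain C where "\<forall>x\<in>lp p. lp_norm p (S x) \<le> C * lp_norm p x"
    using bdd_opsD(4)[OF assms(1)] by blast
  then show ?thesis unfolding op_norm_def
    by (intro cSup_upper) (use assms in \<open>auto intro!: bdd_aboveI[of _ C]\<close>)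
qed

lemma abs_matrix_entry_le_op_norm:
  assumes "S \<in> bdd_ops p" "0 < p"
  shows "\<bar>S (unit_vec k) n\<bar> \<le> op_norm p S"
  using abs_le_lp_norm[OF bdd_opsD(1)[OF assms(1) unit_vec_in_lp] assms(2)]
    lp_norm_le_op_norm[OF assms(1) unit_vec_in_lp lp_norm_unit_vec[OF assms(2)]]
  by (rule order_trans)

lemma bdd_ops_diagonal_truncation:
  assumes S: "S \<in> bdd_ops p" and x: "x \<in> lp p" and p: "0 < p"
    and Su: "\<And>k. S (unit_vec k) = (\<lambda>n. c k * unit_vec k n)"
  shows "S (\<lambda>k. if k < N then x k else 0) = (\<lambda>n. if n < N then c n * x n else 0)"
proof (induction N)
  case 0
  have "S (\<lambda>k. 0 * x k) = (\<lambda>k. 0 * S x k)" by (rule bdd_opsD(3)[OF S x])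
  then show ?case by simp
next
  case (Suc N)
  have trunc: "(\<lambda>k. if k < N then x k else 0) \<in> lp p" by (rule lp_mono[OF x _ p]) auto
  have "(\<lambda>k. if k < Suc N then x k else 0) = (\<lambda>k. (if k < N then x k else 0) + x N * unit_vec N k)"
    by (auto simp: unit_vec_def less_Suc_eq)
  then have "S (\<lambda>k. if k < Suc N then x k else 0)
      = (\<lambda>k. S (\<lambda>k. if k < N then x k else 0) k + x N * S (unit_vec N) k)"
    using bdd_opsD(2)[OF S trunc lp_scale[OF unit_vec_in_lp]] bdd_opsD(3)[OF S unit_vec_in_lp]
    by simp
  then show ?case unfolding Suc.IH Su by (auto simp: unit_vec_def less_Suc_eq)
qed

text \<open>The truncations of x converge to x in norm, and S is bounded.\<close>
lemma bdd_ops_diagonal: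
  assumes S: "S \<in> bdd_ops p" and x: "x \<in> lp p" and p: "0 < p"
    and Su: "\<And>k. S (unit_vec k) = (\<lambda>n. c k * unit_vec k n)"
  shows "S x = (\<lambda>n. c n * x n)"
proof
  fix n
  define tail where "tail N = (\<lambda>k. if k < N then 0 else x k)" for N
  obtain C where C: "\<forall>x\<in>lp p. lp_norm p (S x) \<le> C * lp_norm p x"
    using bdd_opsD(4)[OF S] by blast
  have "\<bar>S x n - c n * x n\<bar> \<le> C * lp_norm p (tail N)" if "n < N" for N
  proof -
    have head: "(\<lambda>k. if k < N then x k else 0) \<in> lp p" and tl: "tail N \<in> lp p"
      by (auto intro!: lp_mono[OF x _ p] simp: tail_def)
    have "x = (\<lambda>k. (if k < N then x k else 0) + tail N k)" by (auto simp: tail_def)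
    then have "S x n = S (\<lambda>k. if k < N then x k else 0) n + S (tail N) n"
      using bdd_opsD(2)[OF S head tl] by metis
    then have "\<bar>S x n - c n * x n\<bar> = \<bar>S (tail N) n\<bar>"
      using that by (simp add: bdd_ops_diagonal_truncation[OF S x p Su])
    also have "\<dots> \<le> lp_norm p (S (tail N))" by (rule abs_le_lp_norm[OF bdd_opsD(1)[OF S tl] p])
    also have "\<dots> \<le> C * lp_norm p (tail N)" using C tl by blast
    finally show ?thesis .
  qed
  moreover have "(\<lambda>N. C * lp_norm p (tail N)) \<longlonglongrightarrow> C * 0"
    using lp_norm_tail_tendsto_0[OF x p] by (intro tendsto_mult tendsto_const) (simp add: tail_def)
  ultimately have "\<bar>S x n - c n * x n\<bar> \<le> C * 0"
    by (intro LIMSEQ_le_const) (auto intro!: exI[of _ "Suc n"])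
  then show "S x n = c n * x n" by simp
qed

definition first_coord_proj :: "real \<Rightarrow> (nat \<Rightarrow> real) \<Rightarrow> (nat \<Rightarrow> real)" where
  "first_coord_proj p x = (if x \<in> lp p then (\<lambda>n. x 0 * unit_vec 0 n) else (\<lambda>_. 0))"

lemma first_coord_proj_in_bdd_ops:
  assumes "0 < p"
  shows "first_coord_proj p \<in> bdd_ops p"
  unfolding bdd_ops_def
proof (intro CollectI conjI ballI allI impI)
  show "first_coord_proj p x \<in> lp p" if "x \<in> lp p" for x
    using that by (simp add: first_coord_proj_def lp_scale unit_vec_in_lp)
  show "first_coord_proj p (\<lambda>k. x k + y k) = (\<lambda>k. first_coord_proj p x k + first_coord_proj p y k)"
    if "x \<in> lp p" "y \<in> lp p" for x y
    using that lp_add[OF that assms] by (auto simp: first_coord_proj_def algebra_simps)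
  show "first_coord_proj p (\<lambda>k. a * x k) = (\<lambda>k. a * first_coord_proj p x k)" if "x \<in> lp p" for x a
    using that lp_scale[OF that, of a] by (auto simp: first_coord_proj_def)
  show "\<exists>C. \<forall>x\<in>lp p. lp_norm p (first_coord_proj p x) \<le> C * lp_norm p x"
    using abs_le_lp_norm[OF _ assms, of _ 0]
    by (intro exI[of _ 1]) (simp add: first_coord_proj_def lp_norm_scale[OF unit_vec_in_lp assms]
        lp_norm_unit_vec[OF assms])
qed (simp add: first_coord_proj_def)

lemma first_coord_proj_unit_vec: "first_coord_proj p (unit_vec k) k = (if k = 0 then 1 else 0)"
  by (simp add: first_coord_proj_def unit_vec_in_lp) (simp add: unit_vec_def)

section \<open>Supporting functionals and generalised limits\<close>

lemma supporting_functionalI: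
  assumes T: "T \<in> bdd_ops p" "op_norm p T = 1" "\<phi> T = 1"
    and add: "\<And>S U. S \<in> bdd_ops p \<Longrightarrow> U \<in> bdd_ops p \<Longrightarrow> \<phi> (\<lambda>x k. S x k + U x k) = \<phi> S + \<phi> U"
    and scale: "\<And>S c. S \<in> bdd_ops p \<Longrightarrow> \<phi> (\<lambda>x k. c * S x k) = c * \<phi> S"
    and bound: "\<And>S. S \<in> bdd_ops p \<Longrightarrow> \<bar>\<phi> S\<bar> \<le> op_norm p S"
  shows "supporting_functional p T \<phi>"
  unfolding supporting_functional_def bdd_functional_def
proof (intro conjI ballI allI)
  show "\<exists>C. \<forall>S\<in>bdd_ops p. \<bar>\<phi> S\<bar> \<le> C * op_norm p S"
    using bound by (intro exI[of _ 1]) auto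
  show "dual_norm p \<phi> = 1" unfolding dual_norm_def
  proof (rule cSup_eq_maximum)
    show "1 \<in> {\<bar>\<phi> S\<bar> |S. S \<in> bdd_ops p \<and> op_norm p S \<le> 1}" using T by force
  qed (use bound in force)
qed (use T add scale in auto)

text \<open>Tychonoff: the sequence \<open>k \<mapsto> h k\<close> lies in the compact product of the intervals
  \<open>[-B a, B a]\<close>, so the closures of its tails have a common point g.\<close>
lemma simultaneous_cluster_point:
  fixes h :: "nat \<Rightarrow> 'a \<Rightarrow> real"
  assumes "\<And>a. a \<in> I \<Longrightarrow> Bseq (\<lambda>k. h k a)"
  shows "\<exists>g. \<forall>F \<epsilon> N. finite F \<longrightarrow> F \<subseteq> I \<longrightarrow> 0 < \<epsilon> \<longrightarrow> (\<exists>k\<ge>N. \<forall>a\<in>F. \<bar>g a - h k a\<bar> < \<epsilon>)"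
proof -
  obtain B where B: "\<And>a k. a \<in> I \<Longrightarrow> \<bar>h k a\<bar> \<le> B a"
    using assms unfolding Bseq_def by (metis real_norm_def)
  define X where "X a = subtopology euclideanreal (cball 0 (B a))" for a
  define P where "P = product_topology X I"
  have tX: "topspace (X a) = cball 0 (B a)" for a by (simp add: X_def)
  define C where "C n = P closure_of ((\<lambda>k. restrict (h k) I) ` {n..})" for n
  have "compact_space P"
    unfolding P_def compact_space_product_topology X_def by (auto intro: compact_space_subtopology)
  moreover have "restrict (h n) I \<in> C n" for n
    unfolding C_def by (rule set_mp[OF closure_of_subset]) (use B in \<open>auto simp: P_def tX PiE_iff\<close>)
  ultimately have "(\<Inter>n. C n) \<noteq> {}"
    by (intro compact_space_imp_nest) (auto simp: C_def decseq_def intro!: closure_of_mono)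
  then obtain z where z: "\<And>n. z \<in> C n" by blast
  show ?thesis
  proof (intro exI[of _ z] allI impI)
    fix F \<epsilon> N assume F: "finite F" "F \<subseteq> I" and \<epsilon>: "(0::real) < \<epsilon>"
    define U where "U = (\<Inter>a\<in>F. {f \<in> topspace P. f a \<in> ball (z a) \<epsilon>}) \<inter> topspace P"
    have "openin P {f \<in> topspace P. f a \<in> ball (z a) \<epsilon>}" if "a \<in> F" for a
    proof -
      have "openin (X a) (cball 0 (B a) \<inter> ball (z a) \<epsilon>)"
        unfolding X_def by (rule openin_subtopology_Int2) auto
      then have "openin P {f \<in> topspace P. f a \<in> cball 0 (B a) \<inter> ball (z a) \<epsilon>}"
        unfolding P_def using that F
        by (intro openin_continuous_map_preimage[OF continuous_map_product_projection]) auto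
      moreover have "{f \<in> topspace P. f a \<in> cball 0 (B a) \<inter> ball (z a) \<epsilon>}
          = {f \<in> topspace P. f a \<in> ball (z a) \<epsilon>}"
        using that F by (auto simp: P_def tX PiE_iff)
      ultimately show ?thesis by simp
    qed
    then have "openin P U" unfolding U_def using F by (intro openin_INT) auto
    moreover have "z \<in> U" using z[of N] \<epsilon> by (simp add: U_def C_def in_closure_of)
    ultimately obtain k where "k \<ge> N" "restrict (h k) I \<in> U"
      using z[of N] unfolding C_def in_closure_of by blast
    then show "\<exists>k\<ge>N. \<forall>a\<in>F. \<bar>z a - h k a\<bar> < \<epsilon>"
      using F by (force simp: U_def dist_real_def)
  qed
qed

text \<open>A cluster point, for pointwise convergence on the bounded sequences, of the evaluations
  \<open>x \<mapsto> x k\<close>. It behaves like a Banach limit: linear, bounded by the supremum norm, and equal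
  to the limit on convergent sequences.\<close>
definition evaluation_cluster_point :: "((nat \<Rightarrow> real) \<Rightarrow> real) \<Rightarrow> bool" where
  "evaluation_cluster_point L \<longleftrightarrow> (\<forall>F \<epsilon> N. finite F \<longrightarrow> F \<subseteq> Collect Bseq \<longrightarrow> 0 < \<epsilon>
     \<longrightarrow> (\<exists>k\<ge>N. \<forall>x\<in>F. \<bar>L x - x k\<bar> < \<epsilon>))"

lemma evaluation_cluster_point_exists: "\<exists>L. evaluation_cluster_point L"
  unfolding evaluation_cluster_point_def
  by (rule simultaneous_cluster_point[of _ "\<lambda>k x. x k"]) simp

lemma evaluation_cluster_pointD:
  assumes "evaluation_cluster_point L" "finite F" "F \<subseteq> Collect Bseq" "0 < \<epsilon>"
  shows "\<exists>k\<ge>N. \<forall>x\<in>F. \<bar>L x - x k\<bar> < \<epsilon>"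
  using assms unfolding evaluation_cluster_point_def by blast

lemma Bseq_plus:
  fixes x y :: "nat \<Rightarrow> 'a::real_normed_vector"
  assumes "Bseq x" "Bseq y"
  shows "Bseq (\<lambda>k. x k + y k)"
proof -
  obtain K M where "\<And>k. norm (x k) \<le> K" "\<And>k. norm (y k) \<le> M"
    using assms unfolding Bseq_def by blast
  then show ?thesis by (intro BseqI'[of _ "K + M"]) (metis add_mono norm_triangle_ineq order_trans)
qed

lemma eq_if_abs_diff_le_epsilon:
  fixes a b C :: real
  assumes "\<And>e. 0 < e \<Longrightarrow> \<bar>a - b\<bar> \<le> C * e" "0 < C"
  shows "a = b"
proof -
  have "\<bar>a - b\<bar> \<le> 0 + e" if "0 < e" for e
    using assms(1)[of "e / C"] assms(2) that by simp
  then show ?thesis by (metis field_le_epsilon abs_le_zero_iff eq_iff_diff_eq_0)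
qed

lemma evaluation_cluster_point_add:
  assumes L: "evaluation_cluster_point L" and xy: "Bseq x" "Bseq y"
  shows "L (\<lambda>k. x k + y k) = L x + L y"
proof (rule eq_if_abs_diff_le_epsilon)
  fix e :: real assume "0 < e"
  then obtain k where "\<forall>z\<in>{x, y, \<lambda>k. x k + y k}. \<bar>L z - z k\<bar> < e / 3"
    using evaluation_cluster_pointD[OF L, of "{x, y, \<lambda>k. x k + y k}" "e / 3"] xy Bseq_plus[OF xy]
    by auto
  then have "\<bar>L x - x k\<bar> < e / 3" "\<bar>L y - y k\<bar> < e / 3"
    "\<bar>L (\<lambda>k. x k + y k) - (x k + y k)\<bar> < e / 3" by auto
  then show "\<bar>L (\<lambda>k. x k + y k) - (L x + L y)\<bar> \<le> 1 * e" by arith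
qed simp

lemma evaluation_cluster_point_scale:
  assumes L: "evaluation_cluster_point L" and x: "Bseq x"
  shows "L (\<lambda>k. c * x k) = c * L x"
proof (rule eq_if_abs_diff_le_epsilon)
  fix e :: real assume "0 < e"
  have "Bseq (\<lambda>k. c * x k)" using Bseq_mult[OF Bfun_const x] by simp
  then obtain k where k: "\<forall>z\<in>{x, \<lambda>k. c * x k}. \<bar>L z - z k\<bar> < e"
    using evaluation_cluster_pointD[OF L, of "{x, \<lambda>k. c * x k}" e] x \<open>0 < e\<close> by auto
  have "L (\<lambda>k. c * x k) - c * L x = (L (\<lambda>k. c * x k) - c * x k) - c * (L x - x k)"
    by (simp add: algebra_simps)
  then have "\<bar>L (\<lambda>k. c * x k) - c * L x\<bar> \<le> \<bar>L (\<lambda>k. c * x k) - c * x k\<bar> + \<bar>c\<bar> * \<bar>L x - x k\<bar>"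
    by (metis abs_mult abs_triangle_ineq4)
  also have "\<dots> \<le> e + \<bar>c\<bar> * e"
    using k by (intro add_mono mult_left_mono) auto
  finally show "\<bar>L (\<lambda>k. c * x k) - c * L x\<bar> \<le> (1 + \<bar>c\<bar>) * e" by (simp add: algebra_simps)
qed (simp add: add_pos_nonneg)

lemma evaluation_cluster_point_bound:
  assumes L: "evaluation_cluster_point L" and B: "\<And>k. \<bar>x k\<bar> \<le> B"
  shows "\<bar>L x\<bar> \<le> B"
proof (rule field_le_epsilon)
  fix e :: real assume "0 < e"
  then obtain k where "\<bar>L x - x k\<bar> < e"
    using evaluation_cluster_pointD[OF L, of "{x}" e] BseqI'[of x B] B by auto
  then show "\<bar>L x\<bar> \<le> B + e" using B[of k] by linarith
qed

lemma evaluation_cluster_point_tendsto: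
  assumes L: "evaluation_cluster_point L" and x: "x \<longlonglongrightarrow> l"
  shows "L x = l"
proof (rule eq_if_abs_diff_le_epsilon)
  fix e :: real assume "0 < e"
  obtain N where N: "\<And>k. k \<ge> N \<Longrightarrow> \<bar>x k - l\<bar> < e" using LIMSEQ_D[OF x \<open>0 < e\<close>] by auto
  obtain k where "k \<ge> N" "\<bar>L x - x k\<bar> < e"
    using evaluation_cluster_pointD[OF L, of "{x}" e N] convergent_imp_Bseq[OF convergentI[OF x]]
      \<open>0 < e\<close> by auto
  then show "\<bar>L x - l\<bar> \<le> 2 * e" using N[of k] by linarith
qed simp

section \<open>Diagonal operators\<close>

lemma diagonal_contraction_norm_attain:
  assumes p: "0 < p" and S: "S \<in> bdd_ops p"
    and Su: "\<And>k. S (unit_vec k) = (\<lambda>n. c k * unit_vec k n)"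
    and c0: "c 0 = 1" and c: "\<And>n. n \<ge> 1 \<Longrightarrow> \<bar>c n\<bar> < 1"
  shows "op_norm p S = 1"
    and "norm_attain_set p S = {unit_vec 0, (\<lambda>n. - unit_vec 0 n)}"
proof -
  have c_le: "\<bar>c n\<bar> \<le> 1" for n using c[of n] c0 by (cases "n = 0") auto
  have Sx: "S x = (\<lambda>n. c n * x n)" if "x \<in> lp p" for x
    using bdd_ops_diagonal[OF S that p Su] .
  have e0_lp: "(\<lambda>n. s * unit_vec 0 n) \<in> lp p" for s
    by (rule lp_scale[OF unit_vec_in_lp])
  have e0_norm: "lp_norm p (\<lambda>n. s * unit_vec 0 n) = \<bar>s\<bar>" for s
    using lp_norm_scale[OF unit_vec_in_lp p] lp_norm_unit_vec[OF p] by simp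
  have e0_fixed: "S (\<lambda>n. s * unit_vec 0 n) = (\<lambda>n. s * unit_vec 0 n)" for s
    unfolding Sx[OF e0_lp] using c0 by (simp add: unit_vec_def fun_eq_iff)
  show opS: "op_norm p S = 1" unfolding op_norm_def
  proof (rule cSup_eq_maximum)
    show "1 \<in> {lp_norm p (S x) |x. x \<in> lp p \<and> lp_norm p x = 1}"
      using e0_lp[of 1] e0_norm[of 1] e0_fixed[of 1] by (intro CollectI exI[of _ "unit_vec 0"]) simp
  next
    fix y assume "y \<in> {lp_norm p (S x) |x. x \<in> lp p \<and> lp_norm p x = 1}"
    then obtain x where x: "x \<in> lp p" "lp_norm p x = 1" "y = lp_norm p (S x)" by blast
    then show "y \<le> 1" using lp_norm_mult_le[OF x(1) p c_le] by (simp add: Sx)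
  qed
  show "norm_attain_set p S = {unit_vec 0, (\<lambda>n. - unit_vec 0 n)}"
  proof (intro equalityI subsetI)
    fix x assume "x \<in> norm_attain_set p S"
    then have x: "x \<in> lp p" "lp_norm p x = 1" "lp_norm p (\<lambda>n. c n * x n) = lp_norm p x"
      using opS Sx by (auto simp: norm_attain_set_def)
    have "x n = 0" if "n \<ge> 1" for n
      using lp_norm_mult_eq_imp_eq_0[OF x(1) p c_le x(3) c[OF that]] .
    define s where "s = x 0"
    then have x_eq: "x = (\<lambda>n. s * unit_vec 0 n)"
      using \<open>\<And>n. n \<ge> 1 \<Longrightarrow> x n = 0\<close> by (auto simp: unit_vec_def fun_eq_iff)
    then have "\<bar>s\<bar> = 1" using x(2) e0_norm[of s] by simp
    then consider "s = 1" | "s = -1" by linarith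
    then show "x \<in> {unit_vec 0, (\<lambda>n. - unit_vec 0 n)}" using x_eq by cases simp_all
  next
    fix x assume x: "x \<in> {unit_vec 0, (\<lambda>n. - unit_vec 0 n)}"
    have "(\<lambda>n. s * unit_vec 0 n) \<in> norm_attain_set p S" if "\<bar>s\<bar> = 1" for s
      using e0_lp e0_norm e0_fixed opS that by (simp add: norm_attain_set_def)
    from this[of 1] this[of "-1"] x show "x \<in> norm_attain_set p S" by auto
  qed
qed

lemma not_smooth_op_if_diagonal_tendsto_1:
  assumes p: "0 < p" and S: "S \<in> bdd_ops p" "op_norm p S = 1"
    and S00: "S (unit_vec 0) 0 = 1" and diag_S: "(\<lambda>k. S (unit_vec k) k) \<longlonglongrightarrow> 1"
  shows "\<not> smooth_op p S"
proof
  assume "smooth_op p S"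
  then have unique: "f U = g U"
    if "supporting_functional p S f" "supporting_functional p S g" "U \<in> bdd_ops p" for f g U
    using that unfolding smooth_op_def by blast
  obtain L where L: "evaluation_cluster_point L" using evaluation_cluster_point_exists ..
  define diag where "diag U = (\<lambda>k. U (unit_vec k) k)" for U :: "(nat \<Rightarrow> real) \<Rightarrow> nat \<Rightarrow> real"
  have diag_bound: "\<bar>diag U k\<bar> \<le> op_norm p U" if "U \<in> bdd_ops p" for U k
    using abs_matrix_entry_le_op_norm[OF that p] by (simp add: diag_def)
  then have diag_Bseq: "Bseq (diag U)" if "U \<in> bdd_ops p" for U
    using that by (intro BseqI') auto
  have entry: "supporting_functional p S (\<lambda>U. U (unit_vec 0) 0)"
    by (rule supporting_functionalI) (simp_all add: S S00 abs_matrix_entry_le_op_norm[OF _ p])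
  have limit: "supporting_functional p S (\<lambda>U. L (diag U))"
  proof (rule supporting_functionalI)
    show "L (diag S) = 1" using evaluation_cluster_point_tendsto[OF L diag_S] by (simp add: diag_def)
    show "L (diag (\<lambda>x k. U x k + V x k)) = L (diag U) + L (diag V)"
      if "U \<in> bdd_ops p" "V \<in> bdd_ops p" for U V
      using evaluation_cluster_point_add[OF L diag_Bseq diag_Bseq, OF that] by (simp add: diag_def)
    show "L (diag (\<lambda>x k. c * U x k)) = c * L (diag U)" if "U \<in> bdd_ops p" for U c
      using evaluation_cluster_point_scale[OF L diag_Bseq, OF that] by (simp add: diag_def)
    show "\<bar>L (diag U)\<bar> \<le> op_norm p U" if "U \<in> bdd_ops p" for U
      using evaluation_cluster_point_bound[OF L diag_bound, OF that] .
  qed (use S in simp_all)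
  have "diag (first_coord_proj p) \<longlonglongrightarrow> 0"
    by (rule LIMSEQ_imp_Suc) (simp add: diag_def first_coord_proj_unit_vec)
  then have "L (diag (first_coord_proj p)) = 0" by (rule evaluation_cluster_point_tendsto[OF L])
  moreover have "first_coord_proj p (unit_vec 0) 0 = L (diag (first_coord_proj p))"
    using unique[OF entry limit first_coord_proj_in_bdd_ops[OF p]] .
  ultimately show False by (simp add: first_coord_proj_unit_vec)
qed

theorem mainTheorem8:
  fixes p :: real and T :: "(nat \<Rightarrow> real) \<Rightarrow> (nat \<Rightarrow> real)"
  assumes "1 < p"
    and "T \<in> bdd_ops p"
    and "T (unit_vec 0) = unit_vec 0"
    and "\<And>k. k \<ge> 1 \<Longrightarrow> T (unit_vec k) = (\<lambda>n. (1 - 1 / real (k + 1)) * unit_vec k n)"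
  shows "op_norm p T = 1 \<and> norm_attain_set p T = {unit_vec 0, (\<lambda>n. - unit_vec 0 n)}
         \<and> \<not> smooth_op p T"
proof -
  have p: "0 < p" using assms(1) by simp
  define c where "c k = (if k = 0 then 1 else 1 - 1 / real (k + 1))" for k
  have Tu: "T (unit_vec k) = (\<lambda>n. c k * unit_vec k n)" for k
    using assms(3) assms(4)[of k] by (cases "k = 0") (auto simp: c_def)
  have c: "\<bar>c n\<bar> < 1" if "n \<ge> 1" for n
    using that by (auto simp: c_def field_simps)
  have "c \<longlonglongrightarrow> 1"
  proof (rule LIMSEQ_imp_Suc)
    have "(\<lambda>k. 1 + - inverse (real (Suc (Suc k)))) \<longlonglongrightarrow> 1"
      by (rule LIMSEQ_Suc[OF LIMSEQ_inverse_real_of_nat_add_minus])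
    then show "(\<lambda>k. c (Suc k)) \<longlonglongrightarrow> 1" by (simp add: c_def inverse_eq_divide)
  qed
  moreover have "(\<lambda>k. T (unit_vec k) k) = c" unfolding Tu by (simp add: unit_vec_def)
  ultimately have diag: "(\<lambda>k. T (unit_vec k) k) \<longlonglongrightarrow> 1" by simp
  have c0: "c 0 = 1" by (simp add: c_def)
  have T00: "T (unit_vec 0) 0 = 1" unfolding assms(3) by (simp add: unit_vec_def)
  note T = diagonal_contraction_norm_attain[OF p assms(2) Tu c0 c]
  show ?thesis using T not_smooth_op_if_diagonal_tendsto_1[OF p assms(2) T(1) T00 diag] by blast
qed

end
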